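(* Let $T$ be a rooted edge-weighted full binary tree with $n$ leaves, all root-to-leaf paths of weight $1$, whose topology is known, with experiment outcomes on all triples of leaves generated by the homogeneous noise model. Let $v$ be an internal vertex of $T$ and let $v_\ell$ be a heavy vertex on the rightmost path $P$ such that (i) $v_\ell$ is an ancestor of $v$, and (ii) the child subtree of $v_\ell$ not containing $v$ has $k\ge100$ leaves. For leaves $a,b$ in distinct child subtrees of $v$ and a leaf $c$ in the child subtree of $v_\ell$ not containing $v$, let $p$ be the probability that $Q(a,b,c)$ returns $(a,b)$ ($p$ does not depend on the choice of $a,b,c$). Then there is an algorithm that outputs an estimate $\hat p$ such that $\hat p$ is an unbiased estimator of $p$ and, with high probability, $|\hat p-p|=O\big(\sqrt{\log k/k}\big)$.
   Context: Distances $d$ between leaves are path weights. For each unordered triple of distinct leaves a single experiment $Q(a,b,c)$ returns one pair, independently across triples, with $\Pr[Q(a,b,c)=(a,b)]=\frac{d(a,c)+d(b,c)}{2(d(a,b)+d(b,c)+d(a,c))}$ (and symmetrically). $\mathsf{NL}(v)$ is the number of leaves in the subtree rooted at $v$. Children of each internal vertex are ordered so the right child $\mathsf{rc}$ and left child $\mathsf{lc}$ satisfy $\mathsf{NL}(\mathsf{rc})\ge\mathsf{NL}(\mathsf{lc})$; the rightmost path $P$ starts at the root and always goes to the right child. A vertex is heavy if $\mathsf{NL}(v)\ge\alpha n+1$, $\alpha=\frac16$. "With high probability" means probability $1-o(1)$. *)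

theory Defs
  imports "HOL-Probability.Probability"
begin

text \<open>Nd l wl r wr : left child l reached
 by an edge of weight wl, right child r reached by an edge of weight wr.
 Vertices are addressed by paths from the root (False = left, True = right).\<close>
datatype wtree = Lf | Nd wtree real wtree real

fun subtree_at :: "wtree \<Rightarrow> bool list \<Rightarrow> wtree option" where
  "subtree_at t [] = Some t"
| "subtree_at Lf (b # p) = None"
| "subtree_at (Nd l wl r wr) (b # p) = subtree_at (if b then r else l) p"

fun wdepth :: "wtree \<Rightarrow> bool list \<Rightarrow> real" where
  "wdepth t [] = 0"
| "wdepth Lf (b # p) = 0"
| "wdepth (Nd l wl r wr) (b # p) = (if b then wr + wdepth r p else wl + wdepth l p)"

fun lcp :: "'a list \<Rightarrow> 'a list \<Rightarrow> 'a list" where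
  "lcp (x # xs) (y # ys) = (if x = y then x # lcp xs ys else [])"
| "lcp _ _ = []"

definition tdist :: "wtree \<Rightarrow> bool list \<Rightarrow> bool list \<Rightarrow> real" where
  "tdist t x y = wdepth t x + wdepth t y - 2 * wdepth t (lcp x y)"

definition leaves :: "wtree \<Rightarrow> bool list set" where
  "leaves t = {p. subtree_at t p = Some Lf}"

definition leaves_below :: "wtree \<Rightarrow> bool list \<Rightarrow> bool list set" where
  "leaves_below t u = {p \<in> leaves t. \<exists>q. p = u @ q}"

definition NL :: "wtree \<Rightarrow> bool list \<Rightarrow> nat" where
  "NL t u = card (leaves_below t u)"

definition internal :: "wtree \<Rightarrow> bool list \<Rightarrow> bool" where
  "internal t u = (\<exists>l wl r wr. subtree_at t u = Some (Nd l wl r wr))"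

fun pos_weights :: "wtree \<Rightarrow> bool" where
  "pos_weights Lf = True"
| "pos_weights (Nd l wl r wr) = (wl > 0 \<and> wr > 0 \<and> pos_weights l \<and> pos_weights r)"

fun nlv :: "wtree \<Rightarrow> nat" where
  "nlv Lf = 1"
| "nlv (Nd l wl r wr) = nlv l + nlv r"

fun right_heavy :: "wtree \<Rightarrow> bool" where
  "right_heavy Lf = True"
| "right_heavy (Nd l wl r wr) = (nlv l \<le> nlv r \<and> right_heavy l \<and> right_heavy r)"

fun shape :: "wtree \<Rightarrow> wtree" where
  "shape Lf = Lf"
| "shape (Nd l wl r wr) = Nd (shape l) 0 (shape r) 0"

definition ultrametric1 :: "wtree \<Rightarrow> bool" where
  "ultrametric1 t = (\<forall>p \<in> leaves t. wdepth t p = 1)"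

definition on_rightmost_path :: "bool list \<Rightarrow> bool" where
  "on_rightmost_path u = (\<exists>m. u = replicate m True)"

text \<open>heavy: NL(u) \<ge> alpha n + 1 with alpha = 1/6\<close>
definition heavy :: "wtree \<Rightarrow> bool list \<Rightarrow> bool" where
  "heavy t u = (real (NL t u) \<ge> real (card (leaves t)) / 6 + 1)"

definition triples :: "wtree \<Rightarrow> bool list set set" where
  "triples t = {S. S \<subseteq> leaves t \<and> card S = 3}"

text \<open>Probability that the experiment on triple S returns the pair P:
  for P = {a,b}, S = {a,b,c}: (d(a,c)+d(b,c)) / (2(d(a,b)+d(b,c)+d(a,c))).\<close>
definition qweight :: "wtree \<Rightarrow> bool list set \<Rightarrow> bool list set \<Rightarrow> real" where
  "qweight t S P = (if P \<subseteq> S \<and> card P = 2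
     then (\<Sum>x\<in>P. tdist t x (the_elem (S - P))) / (\<Sum>x\<in>S. \<Sum>y\<in>S. tdist t x y)
     else 0)"

definition Q_pmf :: "wtree \<Rightarrow> bool list set \<Rightarrow> bool list set pmf" where
  "Q_pmf t S = embed_pmf (qweight t S)"

definition outcomes :: "wtree \<Rightarrow> (bool list set \<Rightarrow> bool list set) pmf" where
  "outcomes t = Pi_pmf (triples t) {} (Q_pmf t)"

end

theory Submission
  imports Defs "HOL-Real_Asymp.Real_Asymp"
begin

(*
  Fix leaves a0 and b0 below the two children of v.  For every leaf c below the child of vl
  that does not contain v, ultrametricity gives d(a0,b0) = 2 - 2 w(v) and
  d(a0,c) = d(b0,c) = 2 - 2 w(vl), with w the weighted depth, so Q(a0,b0,c) returns (a0,b0) with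
  the same probability p as Q(a,b,c).  These k experiments are independent, so the fraction of
  them returning (a0,b0) is an unbiased estimate of p, and Hoeffding's inequality with deviation
  sqrt(ln k / k) bounds the failure probability by 2/k^2.
*)

lemma (in prob_space) indep_sets_reindex:
  assumes "inj_on f I" "indep_sets F (f ` I)"
  shows "indep_sets (\<lambda>i. F (f i)) I"
proof -
  have "prob (\<Inter>j\<in>J. A j) = (\<Prod>j\<in>J. prob (A j))"
    if J: "J \<subseteq> I" "J \<noteq> {}" "finite J" and A: "A \<in> Pi J (\<lambda>i. F (f i))" for J A
  proof -
    have inj: "inj_on f J"
      using inj_on_subset[OF assms(1) J(1)] .
    define B where "B = (\<lambda>y. A (the_inv_into J f y))"
    have BA: "B (f j) = A j" if "j \<in> J" for j
      unfolding B_def using the_inv_into_f_f[OF inj that] by simp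
    have "B \<in> Pi (f ` J) F"
      using A BA by auto
    then have "prob (\<Inter>y\<in>f ` J. B y) = (\<Prod>y\<in>f ` J. prob (B y))"
      using assms(2) J unfolding indep_sets_def by (metis finite_imageI image_is_empty image_mono)
    then show ?thesis
      by (simp add: prod.reindex[OF inj] image_image BA cong: INF_cong prod.cong)
  qed
  then show ?thesis
    using assms(2) unfolding indep_sets_def by auto
qed

lemma (in prob_space) indep_vars_reindex:
  assumes "inj_on f I" "indep_vars M' X (f ` I)"
  shows "indep_vars (\<lambda>i. M' (f i)) (\<lambda>i. X (f i)) I"
  using assms indep_sets_reindex[OF assms(1), of "\<lambda>j. {X j -` A \<inter> space M |A. A \<in> sets (M' j)}"]
  unfolding indep_vars_def2 by auto

lemma (in prob_space) expectation_sample_mean: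
  assumes "finite I" "I \<noteq> {}" "\<And>i. i \<in> I \<Longrightarrow> integrable M (X i)"
    "\<And>i. i \<in> I \<Longrightarrow> expectation (X i) = p"
  shows "expectation (\<lambda>\<omega>. (\<Sum>i\<in>I. X i \<omega>) / real (card I)) = p"
  using assms by (simp add: integral_sum)

lemma (in prob_space) sample_mean_deviation:
  fixes X :: "'i \<Rightarrow> 'a \<Rightarrow> real"
  assumes "finite I" "I \<noteq> {}" "indep_vars (\<lambda>_. borel) X I"
    "\<And>i. i \<in> I \<Longrightarrow> AE \<omega> in M. X i \<omega> \<in> {0..1}" "\<And>i. i \<in> I \<Longrightarrow> expectation (X i) = p"
  defines "n \<equiv> real (card I)"
  shows "prob {\<omega> \<in> space M. \<bar>(\<Sum>i\<in>I. X i \<omega>) / n - p\<bar> > sqrt (ln n / n)} \<le> 2 / n\<^sup>2"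
proof -
  interpret Hoeffding_ineq M I X "\<lambda>_. 0" "\<lambda>_. 1" "\<Sum>i\<in>I. expectation (X i)"
    by unfold_locales (use assms in auto)
  have "1 \<le> n"
    using assms(1,2) card_gt_0_iff[of I] by (simp add: n_def)
  define \<epsilon> where "\<epsilon> = n * sqrt (ln n / n)"
  have "0 \<le> \<epsilon>"
    using \<open>1 \<le> n\<close> by (simp add: \<epsilon>_def)
  have "\<epsilon>\<^sup>2 = n * ln n"
  proof -
    have "(sqrt (ln n / n))\<^sup>2 = ln n / n"
      using \<open>1 \<le> n\<close> by simp
    then have "\<epsilon>\<^sup>2 = n\<^sup>2 * (ln n / n)"
      by (simp add: \<epsilon>_def power_mult_distrib)
    then show ?thesis
      using \<open>1 \<le> n\<close> by (simp add: power2_eq_square)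
  qed
  have "{\<omega> \<in> space M. \<bar>(\<Sum>i\<in>I. X i \<omega>) / n - p\<bar> > sqrt (ln n / n)}
      \<subseteq> {\<omega> \<in> space M. \<bar>(\<Sum>i\<in>I. X i \<omega>) - (\<Sum>i\<in>I. expectation (X i))\<bar> \<ge> \<epsilon>}"
  proof safe
    fix \<omega> assume "\<bar>(\<Sum>i\<in>I. X i \<omega>) / n - p\<bar> > sqrt (ln n / n)"
    moreover have "(\<Sum>i\<in>I. X i \<omega>) / n - p = ((\<Sum>i\<in>I. X i \<omega>) - n * p) / n"
      using \<open>1 \<le> n\<close> by (simp add: field_simps)
    ultimately have "\<bar>(\<Sum>i\<in>I. X i \<omega>) - n * p\<bar> > \<epsilon>"
      using \<open>1 \<le> n\<close> by (simp add: \<epsilon>_def pos_less_divide_eq mult.commute)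
    then show "\<bar>(\<Sum>i\<in>I. X i \<omega>) - (\<Sum>i\<in>I. expectation (X i))\<bar> \<ge> \<epsilon>"
      using assms(5) by (simp add: n_def)
  qed
  then have "prob {\<omega> \<in> space M. \<bar>(\<Sum>i\<in>I. X i \<omega>) / n - p\<bar> > sqrt (ln n / n)}
      \<le> prob {\<omega> \<in> space M. \<bar>(\<Sum>i\<in>I. X i \<omega>) - (\<Sum>i\<in>I. expectation (X i))\<bar> \<ge> \<epsilon>}"
    by (intro finite_measure_mono) measurable
  also have "\<dots> \<le> 2 * exp (- 2 * \<epsilon>\<^sup>2 / n)"
    using Hoeffding_ineq_abs_ge[OF \<open>0 \<le> \<epsilon>\<close>] \<open>1 \<le> n\<close> by (simp add: n_def)
  also have "exp (- 2 * \<epsilon>\<^sup>2 / n) = 1 / n\<^sup>2"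
  proof -
    have "- 2 * \<epsilon>\<^sup>2 / n = - ln (n\<^sup>2)"
      using \<open>1 \<le> n\<close> \<open>\<epsilon>\<^sup>2 = n * ln n\<close> by (simp add: ln_realpow)
    then show ?thesis
      using \<open>1 \<le> n\<close> by (simp add: exp_minus inverse_eq_divide)
  qed
  finally show ?thesis
    by simp
qed

lemma subtree_at_append:
  "subtree_at t (u @ q) = (case subtree_at t u of None \<Rightarrow> None | Some s \<Rightarrow> subtree_at s q)"
  by (induction t u rule: subtree_at.induct) auto

lemma subtree_at_LfD: "subtree_at Lf q = Some s \<Longrightarrow> q = [] \<and> s = Lf"
  by (cases q) auto

lemma wdepth_append:
  "subtree_at t u = Some s \<Longrightarrow> wdepth t (u @ q) = wdepth t u + wdepth s q"
  by (induction t u rule: subtree_at.induct) (auto split: if_splits)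

lemma pos_weights_subtree_at:
  "pos_weights t \<Longrightarrow> subtree_at t u = Some s \<Longrightarrow> pos_weights s"
  by (induction t u rule: subtree_at.induct) (auto split: if_splits)

lemma wdepth_nonneg: "pos_weights t \<Longrightarrow> 0 \<le> wdepth t q"
  by (induction t q rule: wdepth.induct) auto

lemma wdepth_pos: "pos_weights t \<Longrightarrow> t \<noteq> Lf \<Longrightarrow> q \<noteq> [] \<Longrightarrow> 0 < wdepth t q"
  by (induction t q rule: wdepth.induct) (auto intro: add_pos_nonneg wdepth_nonneg)

lemma leaves_Nd: "leaves (Nd l wl r wr) = (#) False ` leaves l \<union> (#) True ` leaves r"
  unfolding leaves_def by (auto simp: image_iff elim!: subtree_at.elims split: if_splits)

lemma finite_leaves: "finite (leaves t)"
proof (induction t)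
  case Lf
  have "leaves Lf = {[]}"
    unfolding leaves_def by (auto dest: subtree_at_LfD)
  then show ?case by simp
qed (simp add: leaves_Nd)

lemma leaves_below_append: "leaves_below t (u @ w) \<subseteq> leaves_below t u"
  unfolding leaves_below_def by auto

lemma subtree_at_shape: "subtree_at (shape t) p = map_option shape (subtree_at t p)"
  by (induction t p rule: subtree_at.induct) auto

lemma leaves_below_shape: "leaves_below (shape t) u = leaves_below t u"
proof -
  have "shape s = Lf \<longleftrightarrow> s = Lf" for s
    by (cases s) auto
  then show ?thesis
    unfolding leaves_below_def leaves_def by (auto simp: subtree_at_shape)
qed

lemma lcp_append: "lcp (u @ xs) (u @ ys) = u @ lcp xs ys"
  by (induction u) auto

lemma lcp_self: "lcp xs xs = xs"
  by (induction xs) auto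

lemma lcp_commute: "lcp xs ys = lcp ys xs"
  by (induction xs ys rule: lcp.induct) auto

lemma lcp_prefix: "\<exists>q. xs = lcp xs ys @ q"
  by (induction xs ys rule: lcp.induct) auto

lemma tdist_commute: "tdist t x y = tdist t y x"
  by (simp add: tdist_def lcp_commute)

lemma tdist_self: "tdist t x x = 0"
  by (simp add: tdist_def lcp_self)

lemma tdist_pos:
  assumes "pos_weights t" "x \<in> leaves t" "y \<in> leaves t" "x \<noteq> y"
  shows "0 < tdist t x y"
proof -
  define u where "u = lcp x y"
  obtain q q' where x: "x = u @ q" and y: "y = u @ q'"
    using lcp_prefix[of x y] lcp_prefix[of y x] unfolding u_def lcp_commute[of y] by blast
  obtain s where s: "subtree_at t u = Some s" "subtree_at s q = Some Lf" "subtree_at s q' = Some Lf"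
    using assms(2,3) unfolding x y leaves_def by (auto simp: subtree_at_append split: option.splits)
  have "q \<noteq> []"
    using s assms(4) x y by (auto dest: subtree_at_LfD)
  moreover have "s \<noteq> Lf"
    using s(2) \<open>q \<noteq> []\<close> by (auto dest: subtree_at_LfD)
  moreover have "pos_weights s"
    using pos_weights_subtree_at[OF assms(1) s(1)] .
  ultimately have "0 < wdepth s q + wdepth s q'"
    by (intro add_pos_nonneg wdepth_pos wdepth_nonneg)
  moreover have "tdist t x y = wdepth t x + wdepth t y - 2 * wdepth t u"
    by (simp add: tdist_def u_def)
  ultimately show ?thesis
    unfolding x y wdepth_append[OF s(1)] by simp
qed

lemma lcp_leaves_below_children:
  assumes "a \<in> leaves_below t (u @ [y])" "b \<in> leaves_below t (u @ [\<not> y])"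
  shows "lcp a b = u"
  using assms unfolding leaves_below_def by (auto simp: lcp_append)

lemma leaves_below_children_distinct:
  assumes "a \<in> leaves_below t (u @ [y])" "b \<in> leaves_below t (u @ [\<not> y])"
  shows "a \<noteq> b"
proof
  assume "a = b"
  then have "a = u"
    using lcp_leaves_below_children[OF assms] by (simp add: lcp_self)
  then show False
    using assms(1) unfolding leaves_below_def by auto
qed

lemma tdist_leaves_below_children:
  assumes "ultrametric1 t" "a \<in> leaves_below t (u @ [y])" "b \<in> leaves_below t (u @ [\<not> y])"
  shows "tdist t a b = 2 - 2 * wdepth t u"
  using assms lcp_leaves_below_children[OF assms(2,3)]
  unfolding tdist_def ultrametric1_def leaves_below_def by auto

lemma finite_triples: "finite (triples t)"
  unfolding triples_def using finite_leaves[of t] by (simp add: finite_Pow_iff)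

lemma outcomes_component: "S \<in> triples t \<Longrightarrow> map_pmf (\<lambda>\<omega>. \<omega> S) (outcomes t) = Q_pmf t S"
  unfolding outcomes_def by (simp add: Pi_pmf_component[OF finite_triples])

lemma indep_vars_outcomes:
  "prob_space.indep_vars (measure_pmf (outcomes t)) (\<lambda>_. count_space UNIV) (\<lambda>S \<omega>. \<omega> S) (triples t)"
  unfolding outcomes_def by (rule indep_vars_Pi_pmf[OF finite_triples])

lemma qweight_pair:
  assumes "distinct [a, b, c]"
  shows "qweight t {a, b, c} {a, b} =
    (tdist t a c + tdist t b c) / (2 * (tdist t a b + tdist t a c + tdist t b c))"
proof -
  have "{a, b, c} - {a, b} = {c}"
    using assms by auto
  with assms show ?thesis
    unfolding qweight_def by (simp add: tdist_self tdist_commute algebra_simps)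
qed

lemma subset_triple_card_2:
  assumes "P \<subseteq> {a, b, c}" "card P = 2"
  shows "P = {a, b} \<or> P = {a, c} \<or> P = {b, c}"
  using assms by (auto simp: card_2_iff)

lemma qweight_triple_distribution:
  assumes "pos_weights t" "a \<in> leaves t" "b \<in> leaves t" "c \<in> leaves t" "distinct [a, b, c]"
  shows "0 \<le> qweight t {a, b, c} P"
    and "(\<integral>\<^sup>+P. ennreal (qweight t {a, b, c} P) \<partial>count_space UNIV) = 1"
proof -
  define S where "S = {a, b, c}"
  define D where "D = 2 * (tdist t a b + tdist t a c + tdist t b c)"
  have d_nonneg: "0 \<le> tdist t x y" if "x \<in> S" "y \<in> S" for x y
    using that assms tdist_pos[OF assms(1)] by (cases "x = y") (auto simp: S_def tdist_self less_imp_le)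
  have "0 < D"
    using tdist_pos[OF assms(1-3)] d_nonneg[of a c] d_nonneg[of b c] assms(5)
    by (simp add: D_def S_def)
  have perms: "distinct [a, c, b]" "distinct [b, c, a]"
    using assms(5) by auto
  have ab: "qweight t S {a, b} = (tdist t a c + tdist t b c) / D"
    using qweight_pair[OF assms(5)] by (simp add: S_def D_def)
  have ac: "qweight t S {a, c} = (tdist t a b + tdist t b c) / D"
    using qweight_pair[OF perms(1)] by (simp add: S_def D_def insert_commute tdist_commute algebra_simps)
  have bc: "qweight t S {b, c} = (tdist t a b + tdist t a c) / D"
    using qweight_pair[OF perms(2)] by (simp add: S_def D_def insert_commute tdist_commute algebra_simps)
  define Ps where "Ps = {{a, b}, {a, c}, {b, c}}"
  have support: "qweight t S P = 0" if "P \<notin> Ps" for P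
    using that subset_triple_card_2[of P a b c] unfolding qweight_def Ps_def S_def by auto
  have nonneg: "0 \<le> qweight t S P" for P
    using \<open>0 < D\<close> d_nonneg ab ac bc support[of P]
    by (cases "P \<in> Ps") (auto simp: Ps_def S_def)
  then show "0 \<le> qweight t {a, b, c} P" for P
    by (simp add: S_def)
  have "{a, b} \<noteq> {a, c}" "{a, b} \<noteq> {b, c}" "{a, c} \<noteq> {b, c}"
    using assms(5) by (auto simp: doubleton_eq_iff)
  then have "(\<Sum>P\<in>Ps. qweight t S P) = D / D"
    by (simp add: Ps_def ab ac bc D_def add_divide_distrib[symmetric])
  with \<open>0 < D\<close> have "(\<integral>\<^sup>+P. ennreal (qweight t S P) \<partial>count_space UNIV) = 1"
    by (subst nn_integral_count_space'[of Ps]) (auto simp: Ps_def support nonneg sum_ennreal)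
  then show "(\<integral>\<^sup>+P. ennreal (qweight t {a, b, c} P) \<partial>count_space UNIV) = 1"
    by (simp add: S_def)
qed

lemma prob_outcome_pair:
  assumes "pos_weights t" "a \<in> leaves t" "b \<in> leaves t" "c \<in> leaves t" "distinct [a, b, c]"
  shows "measure_pmf.prob (outcomes t) {\<omega>. \<omega> {a, b, c} = {a, b}} =
    (tdist t a c + tdist t b c) / (2 * (tdist t a b + tdist t a c + tdist t b c))"
proof -
  have "{a, b, c} \<in> triples t"
    using assms(2-5) unfolding triples_def by auto
  then have "measure_pmf.prob (outcomes t) {\<omega>. \<omega> {a, b, c} = {a, b}} =
      pmf (Q_pmf t {a, b, c}) {a, b}"
    by (simp add: pmf_map vimage_def flip: outcomes_component)
  also have "\<dots> = qweight t {a, b, c} {a, b}"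
    unfolding Q_pmf_def using qweight_triple_distribution[OF assms] by (rule pmf_embed_pmf)
  finally show ?thesis
    using qweight_pair[OF assms(5)] by simp
qed

lemma indep_vars_outcome_indicators:
  assumes "inj_on T C" "T ` C \<subseteq> triples t"
  shows "prob_space.indep_vars (measure_pmf (outcomes t)) (\<lambda>_. borel)
    (\<lambda>c. indicator {\<omega>. \<omega> (T c) = P c} :: _ \<Rightarrow> real) C"
proof -
  have M: "prob_space (measure_pmf (outcomes t))"
    by (rule measure_pmf.prob_space_axioms)
  have "prob_space.indep_vars (measure_pmf (outcomes t)) (\<lambda>_. count_space UNIV) (\<lambda>c \<omega>. \<omega> (T c)) C"
    using prob_space.indep_vars_reindex[OF M assms(1)]
      prob_space.indep_vars_subset[OF M indep_vars_outcomes assms(2)] by simp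
  then have "prob_space.indep_vars (measure_pmf (outcomes t)) (\<lambda>_. borel)
      (\<lambda>c \<omega>. indicator {P c} (\<omega> (T c)) :: real) C"
    by (rule prob_space.indep_vars_compose2[OF M]) simp
  moreover have "(\<lambda>c \<omega>. indicator {P c} (\<omega> (T c)) :: real) = (\<lambda>c. indicator {\<omega>. \<omega> (T c) = P c})"
    by (simp add: indicator_def fun_eq_iff)
  ultimately show ?thesis
    by simp
qed

lemma cherry_triple:
  assumes "v = vl @ x # rest"
    "a \<in> leaves_below t (v @ [y])" "b \<in> leaves_below t (v @ [\<not> y])"
    "c \<in> leaves_below t (vl @ [\<not> x])"
  shows "distinct [a, b, c]" and "{a, b, c} \<in> triples t"
proof -
  have "a \<in> leaves_below t (vl @ [x])" "b \<in> leaves_below t (vl @ [x])"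
    using assms(1-3) leaves_below_append[of t "vl @ [x]"] by auto
  then show "distinct [a, b, c]"
    using assms(2-4) leaves_below_children_distinct by auto
  moreover have "{a, b, c} \<subseteq> leaves t"
    using assms(2-4) by (auto simp: leaves_below_def)
  ultimately show "{a, b, c} \<in> triples t"
    by (simp add: triples_def)
qed

lemma cherry_triples:
  assumes "v = vl @ x # rest" "a \<in> leaves_below t (v @ [y])" "b \<in> leaves_below t (v @ [\<not> y])"
  shows "inj_on (\<lambda>c. {a, b, c}) (leaves_below t (vl @ [\<not> x]))"
    and "(\<lambda>c. {a, b, c}) ` leaves_below t (vl @ [\<not> x]) \<subseteq> triples t"
proof -
  show "inj_on (\<lambda>c. {a, b, c}) (leaves_below t (vl @ [\<not> x]))"
  proof
    fix c c' assume "c \<in> leaves_below t (vl @ [\<not> x])" "{a, b, c} = {a, b, c'}"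
    moreover from this have "c \<in> {a, b, c'}"
      by blast
    ultimately show "c = c'"
      using cherry_triple(1)[OF assms, of c] by auto
  qed
  show "(\<lambda>c. {a, b, c}) ` leaves_below t (vl @ [\<not> x]) \<subseteq> triples t"
    using cherry_triple(2)[OF assms] by auto
qed

lemma prob_outcome_cherry:
  assumes "pos_weights t" "ultrametric1 t" "v = vl @ x # rest"
    "a \<in> leaves_below t (v @ [y])" "b \<in> leaves_below t (v @ [\<not> y])"
    "c \<in> leaves_below t (vl @ [\<not> x])"
  shows "measure_pmf.prob (outcomes t) {\<omega>. \<omega> {a, b, c} = {a, b}} =
    (1 - wdepth t vl) / ((1 - wdepth t v) + 2 * (1 - wdepth t vl))"
proof -
  have "a \<in> leaves_below t (vl @ [x])" "b \<in> leaves_below t (vl @ [x])"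
    using assms(3-5) leaves_below_append[of t "vl @ [x]"] by auto
  then have ac: "tdist t a c = 2 - 2 * wdepth t vl" and bc: "tdist t b c = 2 - 2 * wdepth t vl"
    using assms(2,6) tdist_leaves_below_children by auto
  have ab: "tdist t a b = 2 - 2 * wdepth t v"
    using tdist_leaves_below_children[OF assms(2,4,5)] .
  have "a \<in> leaves t" "b \<in> leaves t" "c \<in> leaves t"
    using assms(4-6) by (auto simp: leaves_below_def)
  then have "measure_pmf.prob (outcomes t) {\<omega>. \<omega> {a, b, c} = {a, b}} =
      (tdist t a c + tdist t b c) / (2 * (tdist t a b + tdist t a c + tdist t b c))"
    using prob_outcome_pair[OF assms(1)] cherry_triple(1)[OF assms(3-6)] by blast
  also have "\<dots> = (4 * (1 - wdepth t vl)) / (4 * ((1 - wdepth t v) + 2 * (1 - wdepth t vl)))"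
    unfolding ab ac bc by (simp add: algebra_simps)
  also have "\<dots> = (1 - wdepth t vl) / ((1 - wdepth t v) + 2 * (1 - wdepth t vl))"
    by (rule mult_divide_mult_cancel_left) simp
  finally show ?thesis .
qed

text \<open>The estimator sees only the topology; \<open>v ! length vl\<close> is the direction from vl towards v.\<close>

definition pair_frequency ::
    "wtree \<Rightarrow> bool list \<Rightarrow> bool list \<Rightarrow> (bool list set \<Rightarrow> bool list set) \<Rightarrow> real" where
  "pair_frequency t v vl \<omega> =
    (let a = SOME a. a \<in> leaves_below t (v @ [False]);
         b = SOME b. b \<in> leaves_below t (v @ [True]);
         C = leaves_below t (vl @ [\<not> v ! length vl])
     in (\<Sum>c\<in>C. indicator {\<omega>. \<omega> {a, b, c} = {a, b}} \<omega>) / real (card C))"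

lemma pair_frequency_estimates:
  assumes "pos_weights t" "ultrametric1 t" "v = vl @ x # rest"
    "a \<in> leaves_below t (v @ [y])" "b \<in> leaves_below t (v @ [\<not> y])"
    "c \<in> leaves_below t (vl @ [\<not> x])"
  defines "k \<equiv> real (NL t (vl @ [\<not> x]))"
    and "p \<equiv> measure_pmf.prob (outcomes t) {\<omega>. \<omega> {a, b, c} = {a, b}}"
  shows "measure_pmf.expectation (outcomes t) (pair_frequency (shape t) v vl) = p"
    and "measure_pmf.prob (outcomes t)
      {\<omega>. \<bar>pair_frequency (shape t) v vl \<omega> - p\<bar> > sqrt (ln k / k)} \<le> 2 / k\<^sup>2"
proof -
  have M: "prob_space (measure_pmf (outcomes t))"
    by (rule measure_pmf.prob_space_axioms)
  define a0 where "a0 = (SOME a. a \<in> leaves_below t (v @ [False]))"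
  define b0 where "b0 = (SOME b. b \<in> leaves_below t (v @ [True]))"
  define C where "C = leaves_below t (vl @ [\<not> x])"
  define X :: "bool list \<Rightarrow> (bool list set \<Rightarrow> bool list set) \<Rightarrow> real"
    where "X = (\<lambda>c. indicator {\<omega>. \<omega> {a0, b0, c} = {a0, b0}})"
  have phat: "pair_frequency (shape t) v vl = (\<lambda>\<omega>. (\<Sum>c\<in>C. X c \<omega>) / real (card C))"
    by (simp add: pair_frequency_def fun_eq_iff Let_def assms(3) leaves_below_shape a0_def b0_def C_def X_def)
  have "\<exists>a. a \<in> leaves_below t (v @ [False])" "\<exists>b. b \<in> leaves_below t (v @ [\<not> False])"
    using assms(4,5) by (cases y; auto)+
  then have a0: "a0 \<in> leaves_below t (v @ [False])" and b0: "b0 \<in> leaves_below t (v @ [\<not> False])"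
    unfolding a0_def b0_def by (auto intro: someI_ex)
  have C: "finite C" "C \<noteq> {}" "card C = k"
    using assms(6) finite_leaves[of t] by (auto simp: C_def k_def NL_def leaves_below_def)
  have EX: "measure_pmf.expectation (outcomes t) (X c) = p" if "c \<in> C" for c
    using prob_outcome_cherry[OF assms(1-3) a0 b0, of c] prob_outcome_cherry[OF assms(1-6)] that
    by (simp add: X_def C_def p_def)
  have intX: "integrable (measure_pmf (outcomes t)) (X c)" for c
    unfolding X_def by (rule integrable_real_indicator) (simp_all add: measure_pmf.emeasure_eq_measure)
  show "measure_pmf.expectation (outcomes t) (pair_frequency (shape t) v vl) = p"
    unfolding phat by (rule prob_space.expectation_sample_mean[OF M C(1,2) intX EX])
  from indep_vars_outcome_indicators[OF cherry_triples[OF assms(3) a0 b0], where P = "\<lambda>_. {a0, b0}"]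
  have "prob_space.indep_vars (measure_pmf (outcomes t)) (\<lambda>_. borel) X C"
    by (simp add: X_def C_def)
  then show "measure_pmf.prob (outcomes t)
      {\<omega>. \<bar>pair_frequency (shape t) v vl \<omega> - p\<bar> > sqrt (ln k / k)} \<le> 2 / k\<^sup>2"
    using prob_space.sample_mean_deviation[OF M C(1,2) _ _ EX] unfolding phat C(3)
    by (simp add: X_def)
qed

theorem lemma7:
  "\<exists>(est :: wtree \<Rightarrow> bool list \<Rightarrow> bool list \<Rightarrow> (bool list set \<Rightarrow> bool list set) \<Rightarrow> real)
      (C :: real) (\<delta> :: nat \<Rightarrow> real).
     C > 0 \<and> (\<delta> \<longlonglongrightarrow> 0) \<and>
     (\<forall>t v vl x rest.
        pos_weights t \<and> ultrametric1 t \<and> right_heavy t \<and>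
        internal t v \<and> on_rightmost_path vl \<and> heavy t vl \<and>
        v = vl @ x # rest \<and> NL t (vl @ [\<not> x]) \<ge> 100 \<longrightarrow>
        (let k = NL t (vl @ [\<not> x]);
             phat = est (shape t) v vl
         in (\<forall>a b c y.
               a \<in> leaves_below t (v @ [y]) \<and> b \<in> leaves_below t (v @ [\<not> y]) \<and>
               c \<in> leaves_below t (vl @ [\<not> x]) \<longrightarrow>
               (let p = measure_pmf.prob (outcomes t) {\<omega>. \<omega> {a, b, c} = {a, b}}
                in measure_pmf.expectation (outcomes t) phat = p \<and>
                   measure_pmf.prob (outcomes t)
                     {\<omega>. \<bar>phat \<omega> - p\<bar> > C * sqrt (ln (real k) / real k)} \<le> \<delta> k))))"
proof (intro exI[of _ pair_frequency] exI[of _ 1] exI[of _ "\<lambda>k. 2 / (real k)\<^sup>2"] conjI allI impI)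
  show "(0::real) < 1"
    by simp
  show "(\<lambda>k. 2 / (real k)\<^sup>2) \<longlonglongrightarrow> 0"
    by real_asymp
qed (unfold Let_def, intro allI impI conjI; elim conjE; simp add: pair_frequency_estimates)

end
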